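(* Let $r<0$ and $0<y_1<y_2$, and let $p(z)=\prod_{j=1}^2(z-(r+iy_j))(z-(r-iy_j))$. Then $(1/p(n))_{n\in\mathbb Z_+}$ is not a Hausdorff moment sequence.
   Context: A sequence $(x_n)_{n\in\mathbb Z_+}$ of positive numbers is a Hausdorff moment sequence if there is a positive Radon measure $\mu$ on $[0,1]$ with $x_n=\int_0^1 t^n\,d\mu(t)$ for all $n\in\mathbb Z_+$. *)

theory Defs
  imports "HOL-Analysis.Analysis"
begin

text \<open>A sequence of positive reals is a Hausdorff moment sequence if there is a
  positive finite (= Radon, since [0,1] is compact metric) Borel measure mu on [0,1]
  with x n = integral of t^n d mu for all n.\<close>

definition hausdorff_moment_seq :: "(nat \<Rightarrow> real) \<Rightarrow> bool" where
  "hausdorff_moment_seq x \<longleftrightarrow>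
     (\<forall>n. x n > 0) \<and>
     (\<exists>\<mu> :: real measure.
        sets \<mu> = sets (restrict_space borel {0..1}) \<and>
        finite_measure \<mu> \<and>
        (\<forall>n. integrable \<mu> (\<lambda>t. t ^ n) \<and> x n = (\<integral>t. t ^ n \<partial>\<mu>)))"

end

theory Submission
  imports Defs "HOL-Probability.Sinc_Integral"
begin

text \<open>For a natural number n, 1/p(n) is the integral over u > 0 of exp(-n u) H(u) with the
  explicit kernel H(u) = exp(r u) (sin(y1 u)/y1 - sin(y2 u)/y2) / (y2^2 - y1^2); hence for every
  polynomial Q(t) = \<Sum> b_i t^i the sum \<Sum> b_i/p(i) is the integral of Q(exp(-u)) H(u).
  The kernel is negative at u0 = 3\<pi>/(2 y1). Approximating from above a continuous bump on [0,1]
  concentrated near exp(-u0) by a polynomial Q, and using the exponential decay of H, makes this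
  integral negative although Q \<ge> 0 on [0,1], which is impossible for the moments of a positive
  measure on [0,1].\<close>

subsection \<open>Laplace transforms on the half-line\<close>

lemma set_integrable_exp_mult_sin:
  fixes s y :: real
  assumes "0 < s"
  shows "set_integrable lborel {0<..} (\<lambda>u. exp (-(s*u)) * sin (y*u))"
proof -
  have "set_integrable lborel {0<..} (\<lambda>u. exp (-(u * s)))"
    using integrable_I0i_exp_mscale[OF assms] .
  then show ?thesis
    by (rule set_integrable_bound)
       (auto simp: set_borel_measurable_def abs_mult mult.commute intro!: mult_left_le_one_le)
qed

lemma set_integral_exp_mult_sin:
  fixes s y :: real
  assumes s: "0 < s"
  shows "(LINT u:{0<..}|lborel. exp (-(s*u)) * sin (y*u)) = y / (s^2 + y^2)"
proof -
  define F where "F = (\<lambda>u. - exp (-(s*u)) * (s * sin (y*u) + y * cos (y*u)) / (s^2 + y^2))"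
  have pos: "s^2 + y^2 > 0"
    using s by (simp add: add_pos_nonneg)
  have "(LBINT u=0..\<infinity>. exp (-(s*u)) * sin (y*u)) = 0 - F 0"
  proof (rule interval_integral_FTC_integrable)
    show "(F has_vector_derivative exp (-(s*x)) * sin (y*x)) (at x)" for x
      unfolding F_def using pos
      by (auto intro!: derivative_eq_intros
             simp: has_real_derivative_iff_has_vector_derivative[symmetric] power2_eq_square)
         (simp_all add: field_simps add_nonneg_eq_0_iff)
    show "isCont (\<lambda>x. exp (-(s*x)) * sin (y*x)) x" for x
      by (auto intro!: continuous_intros)
    have "einterval 0 \<infinity> = {0<..}"
      by (auto simp: einterval_def zero_ereal_def)
    then show "set_integrable lborel (einterval 0 \<infinity>) (\<lambda>x. exp (-(s*x)) * sin (y*x))"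
      using set_integrable_exp_mult_sin[OF s] by simp
    show "((F \<circ> real_of_ereal) \<longlongrightarrow> F 0) (at_right 0)"
      unfolding zero_ereal_def ereal_tendsto_simps F_def using s
      by (auto intro!: tendsto_eq_intros)
    have decay: "((\<lambda>t. exp (-(s*t))) \<longlongrightarrow> 0) at_top"
      using s by (auto intro!: exp_at_bot[THEN filterlim_compose] filterlim_tendsto_pos_mult_at_top
                         filterlim_ident simp: filterlim_uminus_at_bot)
    have F_bound: "norm (F u) \<le> exp (-(s*u)) * ((s + \<bar>y\<bar>) / (s^2 + y^2))" for u
    proof -
      have "\<bar>s * sin (y*u)\<bar> \<le> s" "\<bar>y * cos (y*u)\<bar> \<le> \<bar>y\<bar>"
        using s by (simp_all add: abs_mult mult_left_le abs_cos_le_one)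
      then have "\<bar>s * sin (y*u) + y * cos (y*u)\<bar> \<le> s + \<bar>y\<bar>"
        by linarith
      then show ?thesis
        unfolding F_def using pos by (simp add: abs_mult divide_right_mono mult_left_mono)
    qed
    have "(F \<longlongrightarrow> 0) at_top"
      using Lim_null_comparison[OF always_eventually[OF allI[OF F_bound]] tendsto_mult_left_zero[OF decay]]
      by simp
    then show "((F \<circ> real_of_ereal) \<longlongrightarrow> 0) (at_left \<infinity>)"
      unfolding ereal_tendsto_simps .
  qed simp
  then show ?thesis
    using pos by (simp add: interval_lebesgue_integral_0_infty F_def)
qed

lemma set_integral_exp_neg:
  fixes r :: real
  assumes "r < 0"
  shows "set_integrable lborel {0<..} (\<lambda>u. exp (r*u))"
    and "(LINT u:{0<..}|lborel. exp (r*u)) = - 1 / r"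
proof -
  show "set_integrable lborel {0<..} (\<lambda>u. exp (r*u))"
    using integrable_I0i_exp_mscale[of "-r"] assms by (simp add: mult.commute)
  have "(LBINT u=0..\<infinity>. exp (-(u * (-r)))) = 1 / (-r)"
    using LBINT_I0i_exp_mscale[of "-r"] assms by simp
  then show "(LINT u:{0<..}|lborel. exp (r*u)) = - 1 / r"
    by (simp add: interval_lebesgue_integral_0_infty mult.commute)
qed

subsection \<open>Signed densities that are negative somewhere\<close>

lemma abs_poly_le_sum_abs_coeffs:
  fixes t :: real
  assumes "t \<in> {0..1}"
  shows "\<bar>\<Sum>i\<le>m. b i * t ^ i\<bar> \<le> (\<Sum>i\<le>m. \<bar>b i\<bar>)"
proof -
  have "\<bar>\<Sum>i\<le>m. b i * t ^ i\<bar> \<le> (\<Sum>i\<le>m. \<bar>b i * t ^ i\<bar>)"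
    by (rule sum_abs)
  also have "\<dots> \<le> (\<Sum>i\<le>m. \<bar>b i\<bar>)"
    using assms by (intro sum_mono) (simp add: abs_mult power_le_one mult_left_le)
  finally show ?thesis .
qed

lemma set_integrable_poly_exp_mult:
  fixes H :: "real \<Rightarrow> real"
  assumes cont: "continuous_on UNIV H" and r: "r < 0"
    and bound: "\<And>u. 0 < u \<Longrightarrow> \<bar>H u\<bar> \<le> C * exp (r*u)"
  shows "set_integrable lborel {0<..} (\<lambda>u. (\<Sum>i\<le>m. b i * exp (-u) ^ i) * H u)"
proof (rule set_integrable_bound)
  show "set_integrable lborel {0<..} (\<lambda>u. (\<Sum>i\<le>m. \<bar>b i\<bar>) * C * exp (r*u))"
    using set_integral_exp_neg(1)[OF r] by (simp add: mult.assoc set_integrable_mult_right)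
  have "(\<lambda>u. (\<Sum>i\<le>m. b i * exp (-u) ^ i) * H u) \<in> borel_measurable borel"
    by (intro borel_measurable_continuous_onI continuous_intros cont)
  then show "set_borel_measurable lborel {0<..} (\<lambda>u. (\<Sum>i\<le>m. b i * exp (-u) ^ i) * H u)"
    by (simp add: set_borel_measurable_def)
  have "\<bar>(\<Sum>i\<le>m. b i * exp (-u) ^ i) * H u\<bar> \<le> (\<Sum>i\<le>m. \<bar>b i\<bar>) * (C * exp (r*u))" if "0 < u" for u
    unfolding abs_mult using that bound[OF that]
    by (intro mult_mono abs_poly_le_sum_abs_coeffs) auto
  moreover have "0 \<le> (\<Sum>i\<le>m. \<bar>b i\<bar>) * (C * exp (r*u))" if "0 < u" for u
    using order_trans[OF abs_ge_zero bound[OF that]] by (simp add: sum_nonneg)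
  ultimately show "AE u in lborel. u \<in> {0<..} \<longrightarrow>
      norm ((\<Sum>i\<le>m. b i * exp (-u) ^ i) * H u) \<le> norm ((\<Sum>i\<le>m. \<bar>b i\<bar>) * C * exp (r*u))"
    by (intro AE_I2) (simp add: mult.assoc)
qed

lemma exists_bump_below_negative:
  fixes H :: "real \<Rightarrow> real"
  assumes cont: "isCont H u0" and neg: "H u0 < 0" and u0: "0 < u0"
  obtains g :: "real \<Rightarrow> real" and d K where "continuous_on {0..1} g" "\<And>t. 0 \<le> g t"
    "0 < d" "d < u0" "0 < K" "\<And>u. g (exp (-u)) * H u \<le> - K * indicator {u0-d..u0+d} u"
proof -
  have "(H \<longlongrightarrow> H u0) (nhds u0)"
    using cont unfolding isCont_def tendsto_at_iff_tendsto_nhds .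
  then have "\<forall>\<^sub>F u in nhds u0. H u < H u0 / 2"
    by (rule order_tendstoD(2)) (use neg in simp)
  then obtain e where e: "0 < e" and He: "\<And>u. dist u u0 < e \<Longrightarrow> H u < H u0 / 2"
    unfolding eventually_nhds_metric by auto
  define d where "d = min e u0 / 2"
  have d: "0 < d" "d < u0" "2 * d \<le> e"
    using e u0 by (auto simp: d_def)
  \<comment> \<open>a tent on [exp(-(u0+2d)), exp(-(u0-2d))]: under t = exp(-u) it lives where H < H u0 / 2\<close>
  define g where "g = (\<lambda>t. max 0 (min (t - exp (-(u0 + 2*d))) (exp (-(u0 - 2*d)) - t)))"
  define c where "c = min (exp (-(u0 + d)) - exp (-(u0 + 2*d))) (exp (-(u0 - 2*d)) - exp (-(u0 - d)))"
  have c: "0 < c"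
    using d by (auto simp: c_def)
  have below: "H u < H u0 / 2" if "\<bar>u - u0\<bar> < 2 * d" for u
    using that d by (intro He) (simp add: dist_real_def)
  have support: "H u < H u0 / 2" if "g (exp (-u)) \<noteq> 0" for u
  proof -
    define M where "M = min (exp (-u) - exp (-(u0 + 2*d))) (exp (-(u0 - 2*d)) - exp (-u))"
    have "g (exp (-u)) = max 0 M"
      unfolding g_def M_def ..
    with that have "0 < M"
      by (simp add: max_def split: if_splits)
    then have "exp (-(u0 + 2*d)) < exp (-u)" "exp (-u) < exp (-(u0 - 2*d))"
      by (auto simp: M_def)
    then show ?thesis
      unfolding exp_less_cancel_iff by (intro below) arith
  qed
  have bump: "g (exp (-u)) * H u \<le> - (c * - H u0 / 2) * indicator {u0-d..u0+d} u" for u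
  proof (cases "u \<in> {u0-d..u0+d}")
    case True
    then have "c \<le> g (exp (-u))"
      unfolding c_def g_def by (intro max.coboundedI2 min.mono) auto
    moreover have Hu: "H u < H u0 / 2"
      using True d by (intro below) auto
    ultimately have "g (exp (-u)) * H u \<le> c * H u"
      using neg by (intro mult_right_mono_neg) auto
    also have "\<dots> \<le> c * (H u0 / 2)"
      using c Hu by (intro mult_left_mono) auto
    finally show ?thesis
      using True by simp
  next
    case False
    have "g (exp (-u)) * H u \<le> 0"
    proof (cases "g (exp (-u)) = 0")
      case False
      then have "H u < 0"
        using support neg by fastforce
      moreover have "0 \<le> g (exp (-u))"
        by (simp add: g_def)
      ultimately show ?thesis
        by (simp add: mult_nonneg_nonpos)
    qed simp
    with False show ?thesis
      by simp
  qed
  show thesis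
  proof (rule that[of g d "c * - H u0 / 2"])
    show "continuous_on {0..1} g"
      unfolding g_def by (intro continuous_intros)
    show "0 \<le> g t" for t
      by (simp add: g_def)
    show "0 < c * - H u0 / 2"
      using c neg by (simp add: mult_pos_neg)
  qed (use d bump in auto)
qed

lemma polynomial_approx_from_above:
  fixes g :: "real \<Rightarrow> real"
  assumes "continuous_on {0..1} g" and "0 < e"
  obtains b :: "nat \<Rightarrow> real" and m
  where "\<And>t. t \<in> {0..1} \<Longrightarrow> g t \<le> (\<Sum>i\<le>m. b i * t ^ i) \<and> (\<Sum>i\<le>m. b i * t ^ i) \<le> g t + e"
proof -
  obtain q where "polynomial_function q" and q: "\<And>t. t \<in> {0..1} \<Longrightarrow> norm (g t - q t) < e / 2"
    using Stone_Weierstrass_polynomial_function[OF compact_Icc assms(1), of "e / 2"] assms(2) by auto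
  then obtain a m where qa: "q = (\<lambda>t. \<Sum>i\<le>m. a i * t ^ i)"
    using real_polynomial_function_imp_sum real_polynomial_function_eq by blast
  define b where "b = (\<lambda>i. a i + (if i = 0 then e / 2 else 0))"
  have "(\<Sum>i\<le>m. (if i = 0 then e / 2 else 0) * t ^ i) = e / 2" for t
    by (subst sum.cong[OF refl, of _ _ "\<lambda>i. if i = 0 then e / 2 else 0"]) auto
  then have Q: "(\<Sum>i\<le>m. b i * t ^ i) = q t + e / 2" for t
    by (simp add: b_def qa distrib_right sum.distrib)
  show thesis
  proof (rule that)
    fix t :: real
    assume "t \<in> {0..1}"
    then have "\<bar>g t - q t\<bar> < e / 2"
      using q by simp
    then show "g t \<le> (\<Sum>i\<le>m. b i * t ^ i) \<and> (\<Sum>i\<le>m. b i * t ^ i) \<le> g t + e"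
      unfolding Q by linarith
  qed
qed

lemma exists_nonneg_poly_negative_integral:
  fixes H :: "real \<Rightarrow> real"
  assumes cont: "continuous_on UNIV H" and r: "r < 0"
    and bound: "\<And>u. 0 < u \<Longrightarrow> \<bar>H u\<bar> \<le> C * exp (r*u)"
    and u0: "0 < u0" and neg: "H u0 < 0"
  obtains b :: "nat \<Rightarrow> real" and m where "\<And>t. t \<in> {0..1} \<Longrightarrow> 0 \<le> (\<Sum>i\<le>m. b i * t ^ i)"
    and "(LINT u:{0<..}|lborel. (\<Sum>i\<le>m. b i * exp (-u) ^ i) * H u) < 0"
proof -
  have "0 < C * exp (r*u0)"
    using bound[OF u0] neg by linarith
  then have C: "0 < C"
    by (simp add: zero_less_mult_iff)
  have "isCont H u0"
    using cont by (simp add: continuous_on_eq_continuous_at)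
  then obtain g d K where g: "continuous_on {0..1} g" "\<And>t. 0 \<le> g t"
    and d: "0 < d" "d < u0" and K: "0 < K"
    and gH: "\<And>u. g (exp (-u)) * H u \<le> - K * indicator {u0-d..u0+d} u"
    using exists_bump_below_negative neg u0 by metis
  define J where "J = {u0-d..u0+d}"
  \<comment> \<open>the approximation error costs at most e C / (-r) = K d, half of the gain 2 K d on J\<close>
  define e where "e = K * d * (-r) / C"
  have e: "0 < e"
    unfolding e_def using K d C r by (intro divide_pos_pos mult_pos_pos) auto
  obtain b m where Q: "\<And>t. t \<in> {0..1} \<Longrightarrow>
      g t \<le> (\<Sum>i\<le>m. b i * t ^ i) \<and> (\<Sum>i\<le>m. b i * t ^ i) \<le> g t + e"
    using polynomial_approx_from_above[OF g(1) e] by blast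
  define B where "B = (\<lambda>u. - K * indicator J u + e * C * exp (r*u))"
  have QH_le_B: "(\<Sum>i\<le>m. b i * exp (-u) ^ i) * H u \<le> B u" if "0 < u" for u
  proof -
    define t where "t = exp (-u)"
    have t: "t \<in> {0..1}"
      using that by (simp add: t_def)
    have "((\<Sum>i\<le>m. b i * t ^ i) - g t) * H u \<le> e * \<bar>H u\<bar>"
      using Q[OF t] by (intro order_trans[OF mult_left_mono[OF abs_ge_self] mult_right_mono]) auto
    also have "\<dots> \<le> e * (C * exp (r*u))"
      using bound[OF that] e by simp
    finally show ?thesis
      using gH[of u] by (simp add: B_def J_def t_def algebra_simps)
  qed
  have J_integral: "set_integrable lborel {0<..} (\<lambda>u. indicator J u :: real)"
    "(LINT u:{0<..}|lborel. (indicator J u :: real)) = 2 * d"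
  proof -
    have "(\<lambda>u. indicator {0<..} u *\<^sub>R (indicator J u :: real)) = indicator J"
      using d by (auto simp: J_def indicator_def fun_eq_iff)
    then show "set_integrable lborel {0<..} (\<lambda>u. indicator J u :: real)"
      "(LINT u:{0<..}|lborel. (indicator J u :: real)) = 2 * d"
      unfolding set_integrable_def set_lebesgue_integral_def using d
      by (auto simp: J_def emeasure_lborel_Icc intro: integrable_real_indicator)
  qed
  have B_integral: "set_integrable lborel {0<..} B" "(LINT u:{0<..}|lborel. B u) = - K * d"
  proof -
    have K_ind: "set_integrable lborel {0<..} (\<lambda>u. - K * indicator J u)"
      using J_integral(1) by (rule set_integrable_mult_right)
    have C_exp: "set_integrable lborel {0<..} (\<lambda>u. e * C * exp (r*u))"
      using set_integral_exp_neg(1)[OF r] by (rule set_integrable_mult_right)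
    show "set_integrable lborel {0<..} B"
      unfolding B_def using K_ind C_exp by (rule set_integral_add(1))
    have "(LINT u:{0<..}|lborel. B u)
        = (LINT u:{0<..}|lborel. - K * indicator J u) + (LINT u:{0<..}|lborel. e * C * exp (r*u))"
      unfolding B_def using K_ind C_exp by (rule set_integral_add(2))
    also have "\<dots> = - K * (2 * d) + e * C * (- 1 / r)"
      by (simp only: set_integral_mult_right J_integral(2) set_integral_exp_neg(2)[OF r])
    also have "\<dots> = - K * d"
      using C r by (simp add: e_def field_simps)
    finally show "(LINT u:{0<..}|lborel. B u) = - K * d" .
  qed
  show thesis
  proof (rule that)
    show "0 \<le> (\<Sum>i\<le>m. b i * t ^ i)" if "t \<in> {0..1}" for t
      using Q[OF that] g(2)[of t] by linarith
    have "(LINT u:{0<..}|lborel. (\<Sum>i\<le>m. b i * exp (-u) ^ i) * H u) \<le> (LINT u:{0<..}|lborel. B u)"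
      using set_integrable_poly_exp_mult[OF cont r bound] B_integral(1) QH_le_B
      by (intro set_integral_mono) auto
    also have "\<dots> < 0"
      using K d B_integral(2) by simp
    finally show "(LINT u:{0<..}|lborel. (\<Sum>i\<le>m. b i * exp (-u) ^ i) * H u) < 0" .
  qed
qed

lemma hausdorff_moment_seq_nonneg_poly:
  fixes x :: "nat \<Rightarrow> real"
  assumes "hausdorff_moment_seq x" and nonneg: "\<And>t. t \<in> {0..1} \<Longrightarrow> 0 \<le> (\<Sum>i\<le>m. b i * t ^ i)"
  shows "0 \<le> (\<Sum>i\<le>m. b i * x i)"
proof -
  obtain \<mu> :: "real measure" where sets: "sets \<mu> = sets (restrict_space borel {0..1})"
    and mom: "\<And>n. integrable \<mu> (\<lambda>t. t ^ n) \<and> x n = (\<integral>t. t ^ n \<partial>\<mu>)"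
    using assms(1) unfolding hausdorff_moment_seq_def by blast
  have "space \<mu> = {0..1}"
    using sets_eq_imp_space_eq[OF sets] by simp
  then have "0 \<le> (\<integral>t. (\<Sum>i\<le>m. b i * t ^ i) \<partial>\<mu>)"
    using nonneg by (intro integral_nonneg_AE AE_I2) auto
  also have "\<dots> = (\<Sum>i\<le>m. b i * x i)"
    using mom by (simp add: Bochner_Integration.integral_sum)
  finally show ?thesis .
qed

subsection \<open>The kernel of 1/p\<close>

definition laplace_kernel :: "real \<Rightarrow> real \<Rightarrow> real \<Rightarrow> real \<Rightarrow> real" where
  "laplace_kernel r y1 y2 u = exp (r*u) * (sin (y1*u) / y1 - sin (y2*u) / y2) / (y2^2 - y1^2)"

lemma continuous_on_laplace_kernel: "continuous_on UNIV (laplace_kernel r y1 y2)"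
  unfolding laplace_kernel_def divide_inverse by (intro continuous_intros)

lemma abs_laplace_kernel_le:
  fixes r y1 y2 :: real
  assumes "0 < y1" and "y1 < y2"
  shows "\<bar>laplace_kernel r y1 y2 u\<bar> \<le> (1/y1 + 1/y2) / (y2^2 - y1^2) * exp (r*u)"
proof -
  have D: "0 < y2^2 - y1^2"
    using assms by (simp add: power_strict_mono)
  have "\<bar>sin (y1*u) / y1\<bar> \<le> 1/y1" "\<bar>sin (y2*u) / y2\<bar> \<le> 1/y2"
    using assms by (simp_all add: abs_sin_le_one divide_right_mono)
  then have "\<bar>sin (y1*u) / y1 - sin (y2*u) / y2\<bar> \<le> 1/y1 + 1/y2"
    by linarith
  then show ?thesis
    unfolding laplace_kernel_def using D
    by (simp add: abs_mult divide_right_mono mult.commute mult_left_mono)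
qed

lemma laplace_kernel_neg:
  fixes r y1 y2 :: real
  assumes "0 < y1" and "y1 < y2"
  shows "laplace_kernel r y1 y2 (3 * pi / (2 * y1)) < 0"
proof -
  define u where "u = 3 * pi / (2 * y1)"
  have "y1 * u = pi + pi / 2"
    using assms by (simp add: u_def field_simps)
  then have "sin (y1 * u) / y1 = - 1 / y1"
    by (simp only: sin_add sin_pi cos_pi sin_pi_half cos_pi_half) simp
  moreover have "- 1 / y2 \<le> sin (y2 * u) / y2"
    using assms divide_right_mono[OF sin_ge_minus_one[of "y2 * u"], of y2] by simp
  moreover have "1 / y2 < 1 / y1"
    using assms by (simp add: frac_less2)
  ultimately have "sin (y1 * u) / y1 - sin (y2 * u) / y2 < 0"
    by linarith
  moreover have "0 < y2^2 - y1^2"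
    using assms by (simp add: power_strict_mono)
  ultimately show ?thesis
    unfolding laplace_kernel_def u_def[symmetric] by (simp add: divide_neg_pos mult_pos_neg)
qed

lemma laplace_kernel_transform:
  fixes r s y1 y2 :: real
  assumes "r < s" and "0 < y1" and "y1 < y2"
  shows "set_integrable lborel {0<..} (\<lambda>u. exp (-(s*u)) * laplace_kernel r y1 y2 u)"
    and "(LINT u:{0<..}|lborel. exp (-(s*u)) * laplace_kernel r y1 y2 u)
           = 1 / (((s - r)^2 + y1^2) * ((s - r)^2 + y2^2))"
proof -
  define a where "a = s - r"
  have a: "0 < a"
    using assms by (simp add: a_def)
  define D where "D = y2^2 - y1^2"
  have D: "0 < D"
    using assms by (simp add: D_def power_strict_mono)
  have eq: "exp (-(s*u)) * laplace_kernel r y1 y2 u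
      = (exp (-(a*u)) * sin (y1*u) / y1 - exp (-(a*u)) * sin (y2*u) / y2) / D" for u
  proof -
    have "exp (-(s*u)) * laplace_kernel r y1 y2 u
        = (exp (-(s*u)) * exp (r*u)) * (sin (y1*u) / y1 - sin (y2*u) / y2) / D"
      unfolding laplace_kernel_def D_def by (simp add: mult.assoc)
    also have "exp (-(s*u)) * exp (r*u) = exp (-(a*u))"
      by (simp add: exp_add[symmetric] a_def algebra_simps)
    finally show ?thesis
      by (simp add: algebra_simps)
  qed
  have sin1: "set_integrable lborel {0<..} (\<lambda>u. exp (-(a*u)) * sin (y1*u))"
    and sin2: "set_integrable lborel {0<..} (\<lambda>u. exp (-(a*u)) * sin (y2*u))"
    using set_integrable_exp_mult_sin[OF a] by auto
  then show "set_integrable lborel {0<..} (\<lambda>u. exp (-(s*u)) * laplace_kernel r y1 y2 u)"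
    unfolding eq by (intro set_integrable_divide set_integral_diff) auto
  have "(LINT u:{0<..}|lborel. exp (-(s*u)) * laplace_kernel r y1 y2 u)
      = ((y1 / (a^2 + y1^2)) / y1 - (y2 / (a^2 + y2^2)) / y2) / D"
    unfolding eq using sin1 sin2 by (simp add: set_integral_diff set_integral_exp_mult_sin[OF a])
  also have "\<dots> = 1 / ((a^2 + y1^2) * (a^2 + y2^2))"
  proof -
    have "0 < a^2 + y1^2" "0 < a^2 + y2^2"
      using a by (simp_all add: add_pos_nonneg)
    then have "1 / (a^2 + y1^2) - 1 / (a^2 + y2^2) = D / ((a^2 + y1^2) * (a^2 + y2^2))"
      using a by (subst diff_frac_eq) (simp_all add: D_def)
    then show ?thesis
      using assms D by simp
  qed
  finally show "(LINT u:{0<..}|lborel. exp (-(s*u)) * laplace_kernel r y1 y2 u)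
      = 1 / (((s - r)^2 + y1^2) * ((s - r)^2 + y2^2))"
    by (simp add: a_def)
qed

lemma set_integral_poly_exp_laplace_kernel:
  fixes r y1 y2 :: real
  assumes "r < 0" and "0 < y1" and "y1 < y2"
  shows "(LINT u:{0<..}|lborel. (\<Sum>i\<le>m. b i * exp (-u) ^ i) * laplace_kernel r y1 y2 u)
      = (\<Sum>i\<le>m. b i / (((real i - r)^2 + y1^2) * ((real i - r)^2 + y2^2)))"
proof -
  have pow: "exp (-u) ^ i = exp (-(real i * u))" for u i
    by (simp add: exp_of_nat_mult[symmetric])
  let ?f = "\<lambda>i u. indicator {0<..} u *\<^sub>R (exp (-u) ^ i * laplace_kernel r y1 y2 u)"
  have int: "integrable lborel (?f i)" for i
    using laplace_kernel_transform(1)[of r "real i" y1 y2] assms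
    unfolding set_integrable_def pow by simp
  have "(LINT u:{0<..}|lborel. (\<Sum>i\<le>m. b i * exp (-u) ^ i) * laplace_kernel r y1 y2 u)
      = (\<integral>u. (\<Sum>i\<le>m. b i * ?f i u) \<partial>lborel)"
    unfolding set_lebesgue_integral_def real_scaleR_def by (simp add: sum_distrib_left sum_distrib_right mult_ac)
  also have "\<dots> = (\<Sum>i\<le>m. b i * (LINT u:{0<..}|lborel. exp (-u) ^ i * laplace_kernel r y1 y2 u))"
    using int by (simp add: set_lebesgue_integral_def)
  also have "\<dots> = (\<Sum>i\<le>m. b i / (((real i - r)^2 + y1^2) * ((real i - r)^2 + y2^2)))"
    unfolding pow using assms by (simp add: laplace_kernel_transform(2))
  finally show ?thesis .
qed

lemma mult_conj_roots_of_real: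
  fixes x r y :: real
  shows "(complex_of_real x - (complex_of_real r + \<i> * complex_of_real y)) *
         (complex_of_real x - (complex_of_real r - \<i> * complex_of_real y))
       = complex_of_real ((x - r)^2 + y^2)"
  by (simp add: complex_eq_iff power2_eq_square algebra_simps)

theorem mainTheorem7:
  fixes r y1 y2 :: real
  assumes "r < 0" and "0 < y1" and "y1 < y2"
  defines "p \<equiv> (\<lambda>z::complex.
             (z - (complex_of_real r + \<i> * complex_of_real y1)) * (z - (complex_of_real r - \<i> * complex_of_real y1)) *
             ((z - (complex_of_real r + \<i> * complex_of_real y2)) * (z - (complex_of_real r - \<i> * complex_of_real y2))))"
  shows "\<not> hausdorff_moment_seq (\<lambda>n. Re (1 / p (of_nat n)))"
proof
  assume moment: "hausdorff_moment_seq (\<lambda>n. Re (1 / p (of_nat n)))"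
  have p: "Re (1 / p (of_nat n)) = 1 / (((real n - r)^2 + y1^2) * ((real n - r)^2 + y2^2))" for n
    unfolding p_def using mult_conj_roots_of_real[of "real n" r y1] mult_conj_roots_of_real[of "real n" r y2]
    by (metis Re_complex_of_real of_real_1 of_real_divide of_real_mult of_real_of_nat_eq)
  obtain b m where nonneg: "\<And>t. t \<in> {0..1} \<Longrightarrow> 0 \<le> (\<Sum>i\<le>m. b i * t ^ i)"
    and "(LINT u:{0<..}|lborel. (\<Sum>i\<le>m. b i * exp (-u) ^ i) * laplace_kernel r y1 y2 u) < 0"
    using exists_nonneg_poly_negative_integral[OF continuous_on_laplace_kernel assms(1)
        abs_laplace_kernel_le[OF assms(2,3)] _ laplace_kernel_neg[OF assms(2,3)]] assms(2) by auto
  then have "(\<Sum>i\<le>m. b i * Re (1 / p (of_nat i))) < 0"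
    by (simp add: set_integral_poly_exp_laplace_kernel[OF assms(1-3)] p)
  moreover have "0 \<le> (\<Sum>i\<le>m. b i * Re (1 / p (of_nat i)))"
    using moment nonneg by (rule hausdorff_moment_seq_nonneg_poly)
  ultimately show False
    by simp
qed

end
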